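(* Let $n\ge 1$ and let $\mathbf F_n\in\mathbb C^{n\times n}$ be the unitary discrete Fourier transform matrix, $[\mathbf F_n]_{j,k}=n^{-1/2}e^{-2\pi i jk/n}$ for $j,k=0,\dots,n-1$. Let $\boldsymbol\Sigma\in\mathbb C^{n\times n}$ be Hermitian positive semidefinite and let $\mathbf g\sim\mathcal{CN}(\mathbf 0,\boldsymbol\Sigma)$, i.e. $\mathbf g=\boldsymbol\Sigma^{1/2}(\mathbf x+i\mathbf y)$ with $\mathbf x,\mathbf y\sim\mathcal N(\mathbf 0,\mathbf I_n)$ independent real standard Gaussian vectors. Then for every $\alpha>0$, \[ \Pr\big(\|\mathbf F_n\mathbf g\|_\infty\le\alpha\,\|\boldsymbol\Sigma^{1/2}\|_2\big)\ \ge\ \frac{\gamma(n,\alpha^2/2)}{\Gamma(n)}. \]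
   Context: $\|\cdot\|_\infty$ is the maximum modulus of the entries of a vector, $\|\cdot\|_2$ on matrices is the spectral norm, $\boldsymbol\Sigma^{1/2}$ is the Hermitian positive semidefinite square root, $\Gamma$ is the Gamma function and $\gamma(s,x)=\int_0^x t^{s-1}e^{-t}\,dt$ is the lower incomplete Gamma function. The convention for complex normal vectors (real and imaginary parts of the underlying standard vector each standard real Gaussian) is the one under which $\|\mathbf x+i\mathbf y\|_2$ follows a $\chi$-distribution with $2n$ degrees of freedom. *)

theory Defs
  imports "HOL-Probability.Probability"
begin

text \<open>Vectors in C^n are functions nat => complex (only indices < n matter);
  n x n matrices are functions nat => nat => complex.\<close>

definition mat_vec :: "nat \<Rightarrow> (nat \<Rightarrow> nat \<Rightarrow> complex) \<Rightarrow> (nat \<Rightarrow> complex) \<Rightarrow> (nat \<Rightarrow> complex)" where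
  "mat_vec n A v = (\<lambda>i. \<Sum>j<n. A i j * v j)"

definition vec_norm2 :: "nat \<Rightarrow> (nat \<Rightarrow> complex) \<Rightarrow> real" where
  "vec_norm2 n v = sqrt (\<Sum>i<n. (cmod (v i))\<^sup>2)"

definition vec_norm_inf :: "nat \<Rightarrow> (nat \<Rightarrow> complex) \<Rightarrow> real" where
  "vec_norm_inf n v = Max ((\<lambda>i. cmod (v i)) ` {..<n})"

definition spec_norm :: "nat \<Rightarrow> (nat \<Rightarrow> nat \<Rightarrow> complex) \<Rightarrow> real" where
  "spec_norm n A = Sup {vec_norm2 n (mat_vec n A v) | v. vec_norm2 n v \<le> 1}"

definition hermitian_mat :: "nat \<Rightarrow> (nat \<Rightarrow> nat \<Rightarrow> complex) \<Rightarrow> bool" where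
  "hermitian_mat n A \<longleftrightarrow> (\<forall>i<n. \<forall>j<n. A i j = cnj (A j i))"

definition psd_mat :: "nat \<Rightarrow> (nat \<Rightarrow> nat \<Rightarrow> complex) \<Rightarrow> bool" where
  "psd_mat n A \<longleftrightarrow> hermitian_mat n A \<and>
     (\<forall>v. 0 \<le> Re (\<Sum>i<n. cnj (v i) * mat_vec n A v i))"

definition mat_mult :: "nat \<Rightarrow> (nat \<Rightarrow> nat \<Rightarrow> complex) \<Rightarrow> (nat \<Rightarrow> nat \<Rightarrow> complex) \<Rightarrow> (nat \<Rightarrow> nat \<Rightarrow> complex)" where
  "mat_mult n A B = (\<lambda>i k. \<Sum>j<n. A i j * B j k)"

definition dft_mat :: "nat \<Rightarrow> nat \<Rightarrow> nat \<Rightarrow> complex" where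
  "dft_mat n j k = exp (- 2 * of_real pi * \<i> * of_nat j * of_nat k / of_nat n) / of_real (sqrt (real n))"

definition lower_inc_Gamma :: "real \<Rightarrow> real \<Rightarrow> real" where
  "lower_inc_Gamma s x = integral {0..x} (\<lambda>t. t powr (s - 1) * exp (- t))"

definition std_gauss :: "real measure" where
  "std_gauss = density lborel std_normal_density"

definition gauss_pair :: "nat \<Rightarrow> ((nat \<Rightarrow> real) \<times> (nat \<Rightarrow> real)) measure" where
  "gauss_pair n = (PiM {..<n} (\<lambda>_. std_gauss)) \<Otimes>\<^sub>M (PiM {..<n} (\<lambda>_. std_gauss))"

end

theory Submission
  imports Defs "HOL-Analysis.L2_Norm"
begin

text \<open>Write \<open>z = x + iy\<close>. Every row of the unitary DFT matrix is a unit vector, so by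
  Cauchy--Schwarz \<open>|(F S z)\<^sub>i| \<le> \<parallel>S z\<parallel>\<^sub>2 \<le> \<parallel>S\<parallel>\<^sub>2 \<parallel>z\<parallel>\<^sub>2\<close>; hence the event contains
  \<open>\<parallel>z\<parallel>\<^sub>2\<^sup>2 \<le> \<alpha>\<^sup>2\<close>. Each \<open>|z\<^sub>j|\<^sup>2 = x\<^sub>j\<^sup>2 + y\<^sub>j\<^sup>2\<close> is exponential with rate 1/2
  (the Gaussian mass of a disc, computed with the substitution \<open>y = |x| s\<close>), and these are
  independent, so \<open>\<parallel>z\<parallel>\<^sub>2\<^sup>2\<close> is Erlang with shape \<open>n\<close> and rate 1/2. Its distribution
  function at \<open>\<alpha>\<^sup>2\<close> is \<open>\<gamma>(n, \<alpha>\<^sup>2/2) / \<Gamma>(n)\<close>.\<close>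

section \<open>The Gaussian mass of a disc\<close>

lemma nn_integral_lborel_even:
  fixes g :: "real \<Rightarrow> ennreal"
  assumes [measurable]: "g \<in> borel_measurable borel" and even: "\<And>x. g (-x) = g x"
  shows "(\<integral>\<^sup>+x. g x \<partial>lborel) = 2 * (\<integral>\<^sup>+x. g x * indicator {0..} x \<partial>lborel)"
proof -
  have "(\<integral>\<^sup>+x. g x \<partial>lborel) = (\<integral>\<^sup>+x. g x * indicator {0..} x + g x * indicator {..<0} x \<partial>lborel)"
    by (intro nn_integral_cong) (auto split: split_indicator)
  also have "\<dots> = (\<integral>\<^sup>+x. g x * indicator {0..} x \<partial>lborel) + (\<integral>\<^sup>+x. g x * indicator {..<0} x \<partial>lborel)"
    by (intro nn_integral_add) auto
  also have "(\<integral>\<^sup>+x. g x * indicator {..<0} x \<partial>lborel)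
      = (\<integral>\<^sup>+x. g x * indicator {..<0} x \<partial>distr lborel borel uminus)"
    by (simp add: lborel_distr_uminus)
  also have "\<dots> = (\<integral>\<^sup>+x. g (-x) * indicator {..<0} (-x) \<partial>lborel)"
    by (subst nn_integral_distr) auto
  also have "\<dots> = (\<integral>\<^sup>+x. g x * indicator {0..} x \<partial>lborel)"
    by (intro nn_integral_cong_AE, rule eventually_mono[OF AE_lborel_singleton[of 0]])
       (auto simp: even split: split_indicator)
  finally show ?thesis by (simp add: mult_2)
qed

lemma nn_integral_inverse_one_plus_square: "(\<integral>\<^sup>+s. ennreal (1 / (1 + s\<^sup>2)) \<partial>lborel) = ennreal pi"
proof -
  have "(\<integral>\<^sup>+s. ennreal (1 / (1 + s\<^sup>2)) \<partial>lborel)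
      = 2 * (\<integral>\<^sup>+s. ennreal (1 / (1 + s\<^sup>2)) * indicator {0..} s \<partial>lborel)"
    by (rule nn_integral_lborel_even) auto
  also have "(\<integral>\<^sup>+s. ennreal (1 / (1 + s\<^sup>2)) * indicator {0..} s \<partial>lborel) = ennreal (pi / 2 - arctan 0)"
    by (rule nn_integral_FTC_atLeast)
       (auto intro!: derivative_eq_intros tendsto_arctan_at_top
             simp: add_nonneg_eq_0_iff field_simps power2_eq_square)
  also have "2 * ennreal (pi / 2 - arctan 0) = ennreal (2 * (pi / 2))"
    by (subst ennreal_mult) auto
  finally show ?thesis by simp
qed

lemma nn_integral_abs_times_gaussian_truncated:
  fixes c a :: real
  assumes c: "0 < c" and a: "0 \<le> a"
  shows "(\<integral>\<^sup>+x. ennreal (if x\<^sup>2 * c \<le> a then \<bar>x\<bar> * exp (- (c * x\<^sup>2) / 2) else 0) \<partial>lborel)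
     = ennreal (2 * ((1 - exp (- a / 2)) / c))"
proof -
  let ?F = "\<lambda>x. - exp (- (c * x\<^sup>2) / 2) / c"
  have le_iff: "x\<^sup>2 * c \<le> a \<longleftrightarrow> x \<le> sqrt (a / c)" if "0 \<le> x" for x
    using that c a by (metis pos_le_divide_eq real_le_rsqrt real_sqrt_le_iff real_sqrt_unique)
  have "(\<integral>\<^sup>+x. ennreal (if x\<^sup>2 * c \<le> a then \<bar>x\<bar> * exp (- (c * x\<^sup>2) / 2) else 0) \<partial>lborel)
      = 2 * (\<integral>\<^sup>+x. ennreal (if x\<^sup>2 * c \<le> a then \<bar>x\<bar> * exp (- (c * x\<^sup>2) / 2) else 0)
               * indicator {0..} x \<partial>lborel)"
    by (rule nn_integral_lborel_even) auto
  also have "(\<integral>\<^sup>+x. ennreal (if x\<^sup>2 * c \<le> a then \<bar>x\<bar> * exp (- (c * x\<^sup>2) / 2) else 0)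
               * indicator {0..} x \<partial>lborel)
      = (\<integral>\<^sup>+x. ennreal (x * exp (- (c * x\<^sup>2) / 2)) * indicator {0..sqrt (a / c)} x \<partial>lborel)"
    by (intro nn_integral_cong) (auto simp: le_iff split: split_indicator)
  also have "\<dots> = ?F (sqrt (a / c)) - ?F 0"
    using c a by (intro nn_integral_FTC_Icc) (auto intro!: derivative_eq_intros simp: field_simps)
  also have "?F (sqrt (a / c)) - ?F 0 = (1 - exp (- a / 2)) / c"
    using a c by (simp add: field_simps)
  also have "2 * ennreal ((1 - exp (- a / 2)) / c) = ennreal (2 * ((1 - exp (- a / 2)) / c))"
    using c a by (subst ennreal_mult) auto
  finally show ?thesis .
qed

lemma nn_integral_gaussian_disc:
  fixes a :: real
  assumes a: "0 \<le> a"
  shows "(\<integral>\<^sup>+x. \<integral>\<^sup>+y. ennreal (if x\<^sup>2 + y\<^sup>2 \<le> a then exp (- (x\<^sup>2 + y\<^sup>2) / 2) else 0) \<partial>lborel \<partial>lborel)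
     = ennreal (2 * pi * (1 - exp (- a / 2)))"
proof -
  let ?k = "\<lambda>x y::real. ennreal (if x\<^sup>2 + y\<^sup>2 \<le> a then exp (- (x\<^sup>2 + y\<^sup>2) / 2) else 0)"
  have "(\<integral>\<^sup>+x. \<integral>\<^sup>+y. ?k x y \<partial>lborel \<partial>lborel)
      = (\<integral>\<^sup>+x. \<integral>\<^sup>+s. ennreal \<bar>x\<bar> * ?k x (\<bar>x\<bar> * s) \<partial>lborel \<partial>lborel)"
  proof (intro nn_integral_cong_AE, rule eventually_mono[OF AE_lborel_singleton[of 0]])
    fix x :: real
    assume "x \<noteq> 0"
    then have "(\<integral>\<^sup>+y. ?k x y \<partial>lborel) = ennreal \<bar>\<bar>x\<bar>\<bar> * (\<integral>\<^sup>+s. ?k x (0 + \<bar>x\<bar> * s) \<partial>lborel)"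
      by (intro nn_integral_real_affine) auto
    then show "(\<integral>\<^sup>+y. ?k x y \<partial>lborel) = (\<integral>\<^sup>+s. ennreal \<bar>x\<bar> * ?k x (\<bar>x\<bar> * s) \<partial>lborel)"
      by (simp only: add_0_left abs_abs, subst nn_integral_cmult) auto
  qed
  also have "\<dots> = (\<integral>\<^sup>+s. \<integral>\<^sup>+x. ennreal \<bar>x\<bar> * ?k x (\<bar>x\<bar> * s) \<partial>lborel \<partial>lborel)"
    by (rule lborel_pair.Fubini'[symmetric]) measurable
  also have "\<dots> = (\<integral>\<^sup>+s. ennreal (2 * (1 - exp (- a / 2))) * ennreal (1 / (1 + s\<^sup>2)) \<partial>lborel)"
  proof (intro nn_integral_cong)
    fix s :: real
    have c: "0 < 1 + s\<^sup>2" by (simp add: add_pos_nonneg)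
    have "(\<integral>\<^sup>+x. ennreal \<bar>x\<bar> * ?k x (\<bar>x\<bar> * s) \<partial>lborel)
      = (\<integral>\<^sup>+x. ennreal (if x\<^sup>2 * (1 + s\<^sup>2) \<le> a then \<bar>x\<bar> * exp (- ((1 + s\<^sup>2) * x\<^sup>2) / 2) else 0) \<partial>lborel)"
      by (intro nn_integral_cong) (auto simp: ennreal_mult'[symmetric] power_mult_distrib algebra_simps)
    also have "\<dots> = ennreal (2 * ((1 - exp (- a / 2)) / (1 + s\<^sup>2)))"
      by (rule nn_integral_abs_times_gaussian_truncated[OF c a])
    finally show "(\<integral>\<^sup>+x. ennreal \<bar>x\<bar> * ?k x (\<bar>x\<bar> * s) \<partial>lborel)
        = ennreal (2 * (1 - exp (- a / 2))) * ennreal (1 / (1 + s\<^sup>2))"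
      using a c by (simp add: ennreal_mult'[symmetric])
  qed
  also have "\<dots> = ennreal (2 * (1 - exp (- a / 2))) * ennreal pi"
    by (subst nn_integral_cmult) (auto simp: nn_integral_inverse_one_plus_square)
  also have "\<dots> = ennreal (2 * pi * (1 - exp (- a / 2)))"
    using a by (subst ennreal_mult'[symmetric]) (auto simp: algebra_simps)
  finally show ?thesis .
qed

lemma sets_std_gauss [simp, measurable_cong]: "sets std_gauss = sets borel"
  by (simp add: std_gauss_def)

lemma space_std_gauss [simp]: "space std_gauss = UNIV"
  by (simp add: std_gauss_def)

lemma prob_space_std_gauss: "prob_space std_gauss"
  unfolding std_gauss_def by (rule prob_space_normal_density) simp

lemma emeasure_std_gauss_pair_disc:
  fixes a :: real
  assumes a: "0 \<le> a"
  shows "emeasure (std_gauss \<Otimes>\<^sub>M std_gauss)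
           {p \<in> space (std_gauss \<Otimes>\<^sub>M std_gauss). (fst p)\<^sup>2 + (snd p)\<^sup>2 \<le> a}
     = ennreal (1 - exp (- a / 2))"
proof -
  interpret G: prob_space std_gauss by (rule prob_space_std_gauss)
  let ?S = "{p \<in> space (std_gauss \<Otimes>\<^sub>M std_gauss). (fst p)\<^sup>2 + (snd p)\<^sup>2 \<le> a}"
  let ?k = "\<lambda>x y::real. ennreal (if x\<^sup>2 + y\<^sup>2 \<le> a then exp (- (x\<^sup>2 + y\<^sup>2) / 2) else 0)"
  have S: "?S = {p. (fst p)\<^sup>2 + (snd p)\<^sup>2 \<le> a}" by (simp add: space_pair_measure)
  have density_product: "ennreal (std_normal_density x) * (ennreal (std_normal_density y) * indicator ?S (x, y))
      = ennreal (1 / (2 * pi)) * ?k x y" for x y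
  proof -
    have "std_normal_density x * std_normal_density y = 1 / (2 * pi) * exp (- (x\<^sup>2 + y\<^sup>2) / 2)"
      by (simp add: std_normal_density_def field_simps exp_add[symmetric] real_sqrt_mult[symmetric])
    then show ?thesis
      by (auto simp: ennreal_mult'[symmetric] ennreal_mult[symmetric] S split: split_indicator)
  qed
  have "emeasure (std_gauss \<Otimes>\<^sub>M std_gauss) ?S = (\<integral>\<^sup>+x. \<integral>\<^sup>+y. indicator ?S (x, y) \<partial>std_gauss \<partial>std_gauss)"
    by (rule G.emeasure_pair_measure) measurable
  also have "\<dots> = (\<integral>\<^sup>+x. ennreal (std_normal_density x) *
      (\<integral>\<^sup>+y. ennreal (std_normal_density y) * indicator ?S (x, y) \<partial>lborel) \<partial>lborel)"
    unfolding S std_gauss_def by (simp add: nn_integral_density)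
  also have "\<dots> = (\<integral>\<^sup>+x. ennreal (1 / (2 * pi)) * \<integral>\<^sup>+y. ?k x y \<partial>lborel \<partial>lborel)"
    by (simp add: nn_integral_cmult[symmetric] density_product)
  also have "\<dots> = ennreal (1 / (2 * pi)) * ennreal (2 * pi * (1 - exp (- a / 2)))"
    by (subst nn_integral_cmult) (simp_all add: nn_integral_gaussian_disc[OF a])
  also have "\<dots> = ennreal (1 - exp (- a / 2))"
    using a by (subst ennreal_mult[symmetric]) auto
  finally show ?thesis .
qed

section \<open>Finite products of probability spaces\<close>

lemma prod_indicator_eq_indicator_all:
  "finite I \<Longrightarrow> (\<Prod>i\<in>I. indicator (A i) (f i) :: ennreal) = indicator {x. \<forall>i\<in>I. f i \<in> A i} x"
  by (induction I rule: finite_induct) (auto simp: indicator_def)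

lemma distr_zip_PiM_pair:
  assumes I: "finite I" and M: "\<And>i. prob_space (M i)" and N: "\<And>i. prob_space (N i)"
  shows "distr (PiM I M \<Otimes>\<^sub>M PiM I N) (PiM I (\<lambda>i. M i \<Otimes>\<^sub>M N i)) (\<lambda>\<omega>. \<lambda>i\<in>I. (fst \<omega> i, snd \<omega> i))
       = PiM I (\<lambda>i. M i \<Otimes>\<^sub>M N i)"
proof -
  note prob_space_locales = product_prob_space_def product_sigma_finite_def
    product_prob_space_axioms_def pair_prob_space_def pair_sigma_finite_def prob_space_imp_sigma_finite
  interpret PM: product_prob_space M I using M by (simp add: prob_space_locales)
  interpret PN: product_prob_space N I using N by (simp add: prob_space_locales)
  have MN: "prob_space (M i \<Otimes>\<^sub>M N i)" for i
  proof -
    interpret pair_prob_space "M i" "N i" using M N by (simp add: prob_space_locales)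
    show ?thesis by (rule P.prob_space_axioms)
  qed
  interpret PMN: product_prob_space "\<lambda>i. M i \<Otimes>\<^sub>M N i" I using MN by (simp add: prob_space_locales)
  interpret PX: pair_prob_space "PiM I M" "PiM I N"
    using M N by (simp add: prob_space_locales prob_space_PiM)
  let ?X = "PiM I M \<Otimes>\<^sub>M PiM I N"
  let ?\<Phi> = "\<lambda>\<omega>. \<lambda>i\<in>I. (fst \<omega> i, snd \<omega> i)"
  have \<Phi>[measurable]: "?\<Phi> \<in> measurable ?X (PiM I (\<lambda>i. M i \<Otimes>\<^sub>M N i))"
    by measurable
  show ?thesis
  proof (rule PMN.PiM_eqI[OF I])
    fix A assume A: "\<And>i. i \<in> I \<Longrightarrow> A i \<in> sets (M i \<Otimes>\<^sub>M N i)"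
    have [measurable]: "indicator (A i) \<in> borel_measurable (M i \<Otimes>\<^sub>M N i)" if "i \<in> I" for i
      using A[OF that] by simp
    have section_measurable: "(\<lambda>t. indicator (A i) (s, t)) \<in> borel_measurable (N i)"
      if "i \<in> I" "s \<in> space (M i)" for i s
      using A[OF that(1)] by (intro measurable_compose[OF measurable_Pair1'[OF that(2)]]) simp
    have "emeasure (distr ?X (PiM I (\<lambda>i. M i \<Otimes>\<^sub>M N i)) ?\<Phi>) (Pi\<^sub>E I A)
        = (\<integral>\<^sup>+\<omega>. indicator (?\<Phi> -` Pi\<^sub>E I A \<inter> space ?X) \<omega> \<partial>?X)"
      using A by (subst emeasure_distr[OF \<Phi>]) (auto intro!: sets_PiM_I_finite I nn_integral_indicator[symmetric] measurable_sets[OF \<Phi>])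
    also have "\<dots> = (\<integral>\<^sup>+\<omega>. (\<Prod>i\<in>I. indicator (A i) (fst \<omega> i, snd \<omega> i)) \<partial>?X)"
      using I by (intro nn_integral_cong) (auto simp: prod_indicator_eq_indicator_all indicator_def PiE_iff)
    also have "\<dots> = (\<integral>\<^sup>+x. \<integral>\<^sup>+y. (\<Prod>i\<in>I. indicator (A i) (x i, y i)) \<partial>PiM I N \<partial>PiM I M)"
      by (rule sigma_finite_measure.nn_integral_fst[OF prob_space_imp_sigma_finite[OF prob_space_PiM[OF N]], symmetric, where f="\<lambda>\<omega>. \<Prod>i\<in>I. indicator (A i) (fst \<omega> i, snd \<omega> i)", simplified]) measurable
    also have "\<dots> = (\<integral>\<^sup>+x. (\<Prod>i\<in>I. \<integral>\<^sup>+t. indicator (A i) (x i, t) \<partial>N i) \<partial>PiM I M)"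
      by (intro nn_integral_cong PN.product_nn_integral_prod[OF I])
         (auto simp: space_PiM intro!: section_measurable)
    also have "\<dots> = (\<Prod>i\<in>I. \<integral>\<^sup>+s. \<integral>\<^sup>+t. indicator (A i) (s, t) \<partial>N i \<partial>M i)"
      by (rule PM.product_nn_integral_prod[OF I]) measurable
    also have "\<dots> = (\<Prod>i\<in>I. emeasure (M i \<Otimes>\<^sub>M N i) (A i))"
      using A N by (intro prod.cong refl sigma_finite_measure.emeasure_pair_measure[OF prob_space_imp_sigma_finite[OF N], symmetric]) auto
    finally show "emeasure (distr ?X (PiM I (\<lambda>i. M i \<Otimes>\<^sub>M N i)) ?\<Phi>) (Pi\<^sub>E I A)
        = (\<Prod>i\<in>I. emeasure (M i \<Otimes>\<^sub>M N i) (A i))" .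
  qed simp
qed

lemma indep_vars_PiM_components:
  assumes I: "I \<noteq> {}" and M: "\<And>i. prob_space (M i)"
  shows "prob_space.indep_vars (PiM I M) M (\<lambda>i f. f i) I"
proof -
  have P: "prob_space (PiM I M)" by (rule prob_space_PiM) (rule M)
  have "distr (PiM I M) (PiM I M) (\<lambda>f. \<lambda>i\<in>I. f i) = distr (PiM I M) (PiM I M) (\<lambda>f. f)"
    by (intro distr_cong) (auto simp: space_PiM PiE_def extensional_restrict)
  also have "\<dots> = PiM I (\<lambda>i. distr (PiM I M) (M i) (\<lambda>f. f i))"
    using M by (auto intro!: PiM_cong simp: distr_PiM_component)
  finally show ?thesis
    by (subst prob_space.indep_vars_iff_distr_eq_PiM'[OF P I]) simp_all
qed

section \<open>The squared norm of a standard complex Gaussian vector\<close>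

abbreviation std_gauss_plane :: "(real \<times> real) measure" where
  "std_gauss_plane \<equiv> std_gauss \<Otimes>\<^sub>M std_gauss"

lemma prob_space_std_gauss_plane: "prob_space std_gauss_plane"
proof -
  interpret G: prob_space std_gauss by (rule prob_space_std_gauss)
  interpret pair_prob_space std_gauss std_gauss ..
  show ?thesis by (rule P.prob_space_axioms)
qed

lemma distributed_PiM_std_gauss_plane_sq_norm:
  assumes i: "i \<in> I"
  shows "distributed (PiM I (\<lambda>_. std_gauss_plane)) lborel
           (\<lambda>f. (fst (f i))\<^sup>2 + (snd (f i))\<^sup>2) (exponential_density (1/2))"
proof (rule erlang_distributedI)
  let ?P = "PiM I (\<lambda>_. std_gauss_plane)"
  show "(\<lambda>f. (fst (f i))\<^sup>2 + (snd (f i))\<^sup>2) \<in> borel_measurable ?P"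
    using i by measurable
  fix a :: real
  assume a: "0 \<le> a"
  have disc: "{p \<in> space std_gauss_plane. (fst p)\<^sup>2 + (snd p)\<^sup>2 \<le> a} \<in> sets std_gauss_plane"
    by measurable
  have "emeasure ?P {f \<in> space ?P. (fst (f i))\<^sup>2 + (snd (f i))\<^sup>2 \<le> a}
      = emeasure (distr ?P std_gauss_plane (\<lambda>f. f i)) {p \<in> space std_gauss_plane. (fst p)\<^sup>2 + (snd p)\<^sup>2 \<le> a}"
    using i disc
    by (subst emeasure_distr) (auto simp: space_PiM PiE_iff space_pair_measure extensional_def intro!: arg_cong2[where f=emeasure])
  also have "\<dots> = ennreal (1 - exp (- a / 2))"
    by (subst distr_PiM_component[OF prob_space_std_gauss_plane i]) (rule emeasure_std_gauss_pair_disc[OF a])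
  finally show "emeasure ?P {f \<in> space ?P. (fst (f i))\<^sup>2 + (snd (f i))\<^sup>2 \<le> a} = ennreal (erlang_CDF 0 (1/2) a)"
    using a by (simp add: erlang_CDF_def)
qed simp

lemma measure_PiM_std_gauss_plane_sum_sq_norm_le:
  assumes I: "finite I" "I \<noteq> {}" and r: "0 \<le> r"
  shows "measure (PiM I (\<lambda>_. std_gauss_plane))
           {f \<in> space (PiM I (\<lambda>_. std_gauss_plane)). (\<Sum>i\<in>I. (fst (f i))\<^sup>2 + (snd (f i))\<^sup>2) \<le> r}
       = erlang_CDF (card I - 1) (1/2) r"
proof -
  let ?P = "PiM I (\<lambda>_. std_gauss_plane)"
  interpret P: prob_space ?P by (rule prob_space_PiM) (rule prob_space_std_gauss_plane)
  have "P.indep_vars (\<lambda>_. borel) (\<lambda>i f. (fst (f i))\<^sup>2 + (snd (f i))\<^sup>2) I"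
    using P.indep_vars_compose2[OF indep_vars_PiM_components[OF I(2) prob_space_std_gauss_plane],
        of "\<lambda>_ p. (fst p)\<^sup>2 + (snd p)\<^sup>2" "\<lambda>_. borel"]
    by simp
  then have "distributed ?P lborel (\<lambda>f. \<Sum>i\<in>I. (fst (f i))\<^sup>2 + (snd (f i))\<^sup>2) (erlang_density (card I - 1) (1/2))"
    by (intro P.exponential_distributed_sum I distributed_PiM_std_gauss_plane_sq_norm) simp_all
  then show ?thesis
    by (rule P.erlang_distributed_le) (use r in simp_all)
qed

lemma prob_space_gauss_pair: "prob_space (gauss_pair n)"
proof -
  interpret X: prob_space "PiM {..<n} (\<lambda>_. std_gauss)"
    by (rule prob_space_PiM) (rule prob_space_std_gauss)
  interpret pair_prob_space "PiM {..<n} (\<lambda>_. std_gauss)" "PiM {..<n} (\<lambda>_. std_gauss)" ..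
  show ?thesis unfolding gauss_pair_def by (rule P.prob_space_axioms)
qed

lemma measure_gauss_pair_sq_norm_le:
  assumes n: "n \<ge> 1" and r: "0 \<le> r"
  shows "measure (gauss_pair n) {(x, y) \<in> space (gauss_pair n). (\<Sum>i<n. (x i)\<^sup>2 + (y i)\<^sup>2) \<le> r}
       = erlang_CDF (n - 1) (1/2) r"
proof -
  let ?P = "PiM {..<n} (\<lambda>_. std_gauss_plane)"
  let ?zip = "\<lambda>\<omega>. \<lambda>i\<in>{..<n}. (fst \<omega> i, snd \<omega> i)"
  let ?B = "{f \<in> space ?P. (\<Sum>i<n. (fst (f i))\<^sup>2 + (snd (f i))\<^sup>2) \<le> r}"
  have zip[measurable]: "?zip \<in> measurable (gauss_pair n) ?P"
    unfolding gauss_pair_def by measurable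
  have "?zip -` ?B \<inter> space (gauss_pair n)
      = {(x, y) \<in> space (gauss_pair n). (\<Sum>i<n. (x i)\<^sup>2 + (y i)\<^sup>2) \<le> r}"
    using measurable_space[OF zip] by auto
  moreover have "measure (gauss_pair n) (?zip -` ?B \<inter> space (gauss_pair n)) = measure ?P ?B"
    using distr_zip_PiM_pair[of "{..<n}" "\<lambda>_. std_gauss" "\<lambda>_. std_gauss"] prob_space_std_gauss
    by (subst measure_distr[OF zip, symmetric]) (simp_all add: gauss_pair_def)
  moreover have "measure ?P ?B = erlang_CDF (n - 1) (1/2) r"
    using measure_PiM_std_gauss_plane_sum_sq_norm_le[of "{..<n}" r] n r by (simp add: lessThan_empty_iff)
  ultimately show ?thesis by simp
qed

lemma lower_inc_Gamma_div_Gamma_eq_erlang_CDF: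
  fixes n :: nat and b :: real
  assumes n: "n \<ge> 1" and b: "0 \<le> b"
  shows "lower_inc_Gamma (real n) b / Gamma (real n) = erlang_CDF (n - 1) 1 b"
proof -
  define k where "k = n - 1"
  have nk: "n = Suc k" using n by (simp add: k_def)
  let ?f = "\<lambda>t::real. t ^ k * exp (- t)"
  let ?c = "1 - (\<Sum>m\<le>k. b ^ m * exp (- b) / fact m)"
  have int: "?f integrable_on {0..b}"
    by (intro integrable_continuous_interval continuous_intros)
  have "ennreal (integral {0..b} ?f) = (\<integral>\<^sup>+x. ennreal (?f x) * indicator {0..b} x \<partial>lborel)"
    by (rule nn_integral_has_integral_lebesgue'[symmetric]) (auto intro: integrable_integral[OF int])
  also have "\<dots> = ennreal (?c * fact k)"
    using b nn_intergal_power_times_exp_Icc[of b k] by simp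
  finally have "integral {0..b} ?f = ?c * fact k"
    using erlang_CDF_nonneg[of 1 k b] b int
    by (subst (asm) ennreal_inj) (auto simp: erlang_CDF_def intro!: integral_nonneg)
  moreover have "lower_inc_Gamma (real n) b = integral {0..b} ?f"
    unfolding lower_inc_Gamma_def
    by (rule integral_spike[of "{0}"]) (auto simp: nk powr_realpow)
  moreover have "Gamma (real n) = fact k"
    using Gamma_fact[of k] by (simp add: nk add.commute)
  ultimately show ?thesis
    using b by (simp add: erlang_CDF_def k_def)
qed

section \<open>Norm bounds for matrices\<close>

lemma cmod_sum_mult_le:
  fixes a b :: "nat \<Rightarrow> complex"
  shows "cmod (\<Sum>j<n. a j * b j) \<le> sqrt (\<Sum>j<n. (cmod (a j))\<^sup>2) * sqrt (\<Sum>j<n. (cmod (b j))\<^sup>2)"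
proof -
  have "cmod (\<Sum>j<n. a j * b j) \<le> (\<Sum>j<n. \<bar>cmod (a j)\<bar> * \<bar>cmod (b j)\<bar>)"
    using norm_sum[of "\<lambda>j. a j * b j" "{..<n}"] by (simp add: norm_mult)
  also have "\<dots> \<le> L2_set (\<lambda>j. cmod (a j)) {..<n} * L2_set (\<lambda>j. cmod (b j)) {..<n}"
    by (rule L2_set_mult_ineq)
  finally show ?thesis by (simp add: L2_set_def)
qed

lemma cmod_mat_vec_le: "cmod (mat_vec n A v i) \<le> sqrt (\<Sum>j<n. (cmod (A i j))\<^sup>2) * vec_norm2 n v"
  unfolding mat_vec_def vec_norm2_def by (rule cmod_sum_mult_le)

lemma vec_norm2_nonneg: "0 \<le> vec_norm2 n v"
  by (simp add: vec_norm2_def sum_nonneg)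

lemma vec_norm2_mat_vec_le_frobenius:
  "vec_norm2 n (mat_vec n A v) \<le> sqrt (\<Sum>i<n. \<Sum>j<n. (cmod (A i j))\<^sup>2) * vec_norm2 n v"
proof -
  have "(\<Sum>i<n. (cmod (mat_vec n A v i))\<^sup>2) \<le> (\<Sum>i<n. (\<Sum>j<n. (cmod (A i j))\<^sup>2) * (vec_norm2 n v)\<^sup>2)"
  proof (rule sum_mono)
    fix i
    have "(cmod (mat_vec n A v i))\<^sup>2 \<le> (sqrt (\<Sum>j<n. (cmod (A i j))\<^sup>2) * vec_norm2 n v)\<^sup>2"
      by (intro power_mono cmod_mat_vec_le) simp
    then show "(cmod (mat_vec n A v i))\<^sup>2 \<le> (\<Sum>j<n. (cmod (A i j))\<^sup>2) * (vec_norm2 n v)\<^sup>2"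
      by (simp add: power_mult_distrib sum_nonneg)
  qed
  then have "sqrt (\<Sum>i<n. (cmod (mat_vec n A v i))\<^sup>2)
      \<le> sqrt ((\<Sum>i<n. \<Sum>j<n. (cmod (A i j))\<^sup>2) * (vec_norm2 n v)\<^sup>2)"
    by (simp add: real_sqrt_le_mono sum_distrib_right)
  then show ?thesis
    by (simp add: vec_norm2_def real_sqrt_mult sum_nonneg)
qed

lemma vec_norm2_scale: "vec_norm2 n (\<lambda>j. complex_of_real c * v j) = \<bar>c\<bar> * vec_norm2 n v"
  by (simp add: vec_norm2_def norm_mult power_mult_distrib sum_distrib_left[symmetric] real_sqrt_mult)

lemma mat_vec_scale: "mat_vec n A (\<lambda>j. c * v j) = (\<lambda>i. c * mat_vec n A v i)"
  by (simp add: mat_vec_def sum_distrib_left algebra_simps)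

lemma vec_norm2_mat_vec_le_spec_norm_of_unit:
  assumes "vec_norm2 n v \<le> 1"
  shows "vec_norm2 n (mat_vec n A v) \<le> spec_norm n A"
  unfolding spec_norm_def
proof (rule cSup_upper)
  show "vec_norm2 n (mat_vec n A v) \<in> {vec_norm2 n (mat_vec n A v) | v. vec_norm2 n v \<le> 1}"
    using assms by blast
  let ?C = "sqrt (\<Sum>i<n. \<Sum>j<n. (cmod (A i j))\<^sup>2)"
  have "vec_norm2 n (mat_vec n A u) \<le> ?C" if "vec_norm2 n u \<le> 1" for u
    using vec_norm2_mat_vec_le_frobenius[of n A u] mult_left_mono[OF that, of ?C]
    by (simp add: sum_nonneg)
  then show "bdd_above {vec_norm2 n (mat_vec n A v) | v. vec_norm2 n v \<le> 1}"
    by (auto intro!: bdd_aboveI)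
qed

lemma spec_norm_nonneg: "0 \<le> spec_norm n A"
  using vec_norm2_mat_vec_le_spec_norm_of_unit[of n "\<lambda>_. 0" A]
        vec_norm2_nonneg[of n "mat_vec n A (\<lambda>_. 0)"]
  by (simp add: vec_norm2_def[of n "\<lambda>_. 0"])

lemma vec_norm2_mat_vec_le_spec_norm: "vec_norm2 n (mat_vec n A v) \<le> spec_norm n A * vec_norm2 n v"
proof (cases "vec_norm2 n v = 0")
  case True
  then show ?thesis
    using vec_norm2_mat_vec_le_frobenius[of n A v] vec_norm2_nonneg[of n "mat_vec n A v"] by simp
next
  case False
  define r where "r = vec_norm2 n v"
  have r: "0 < r" using False vec_norm2_nonneg[of n v] by (simp add: r_def)
  have "vec_norm2 n (mat_vec n A v) / r = vec_norm2 n (mat_vec n A (\<lambda>j. complex_of_real (1 / r) * v j))"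
    by (simp only: mat_vec_scale vec_norm2_scale) (use r in simp)
  also have "\<dots> \<le> spec_norm n A"
    by (intro vec_norm2_mat_vec_le_spec_norm_of_unit, simp only: vec_norm2_scale) (use r in \<open>simp add: r_def\<close>)
  finally show ?thesis
    using r by (simp add: r_def pos_divide_le_eq mult.commute)
qed

lemma cmod_dft_mat: "n \<ge> 1 \<Longrightarrow> cmod (dft_mat n j k) = 1 / sqrt (real n)"
  unfolding dft_mat_def by (simp add: norm_divide norm_exp_eq_Re)

lemma cmod_dft_mat_vec_le:
  assumes "n \<ge> 1"
  shows "cmod (mat_vec n (dft_mat n) w i) \<le> vec_norm2 n w"
proof -
  have "(\<Sum>j<n. (cmod (dft_mat n i j))\<^sup>2) = 1"
    using assms by (simp add: cmod_dft_mat power_divide)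
  then show ?thesis
    using cmod_mat_vec_le[of n "dft_mat n" w i] by simp
qed

lemma vec_norm_inf_le_iff:
  "n \<ge> 1 \<Longrightarrow> vec_norm_inf n v \<le> c \<longleftrightarrow> (\<forall>i<n. cmod (v i) \<le> c)"
  unfolding vec_norm_inf_def by (auto simp: Max_le_iff lessThan_empty_iff)

lemma vec_norm_inf_dft_mat_vec_le:
  assumes "n \<ge> 1"
  shows "vec_norm_inf n (mat_vec n (dft_mat n) (mat_vec n S z)) \<le> spec_norm n S * vec_norm2 n z"
  using assms order_trans[OF cmod_dft_mat_vec_le vec_norm2_mat_vec_le_spec_norm]
  by (simp add: vec_norm_inf_le_iff)

lemma vec_norm2_Complex: "vec_norm2 n (\<lambda>j. Complex (x j) (y j)) = sqrt (\<Sum>i<n. (x i)\<^sup>2 + (y i)\<^sup>2)"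
  by (simp add: vec_norm2_def cmod_power2)

lemma vec_norm_inf_dft_mat_vec_Complex_le:
  assumes n: "n \<ge> 1" and \<alpha>: "0 \<le> \<alpha>" and xy: "(\<Sum>i<n. (x i)\<^sup>2 + (y i)\<^sup>2) \<le> \<alpha>\<^sup>2"
  shows "vec_norm_inf n (mat_vec n (dft_mat n) (mat_vec n S (\<lambda>j. Complex (x j) (y j)))) \<le> \<alpha> * spec_norm n S"
proof -
  have "vec_norm2 n (\<lambda>j. Complex (x j) (y j)) \<le> \<alpha>"
    using \<alpha> xy by (simp add: vec_norm2_Complex real_le_lsqrt sum_nonneg)
  then have "spec_norm n S * vec_norm2 n (\<lambda>j. Complex (x j) (y j)) \<le> \<alpha> * spec_norm n S"
    by (subst mult.commute) (rule mult_right_mono[OF _ spec_norm_nonneg])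
  with vec_norm_inf_dft_mat_vec_le[OF n] show ?thesis
    by (rule order_trans)
qed

lemma gauss_pair_vec_norm_inf_le_measurable:
  assumes n: "n \<ge> 1"
  shows "{(x, y) \<in> space (gauss_pair n).
           vec_norm_inf n (mat_vec n A (mat_vec n S (\<lambda>j. Complex (x j) (y j)))) \<le> c} \<in> sets (gauss_pair n)"
proof -
  have "{(x, y) \<in> space (gauss_pair n).
           vec_norm_inf n (mat_vec n A (mat_vec n S (\<lambda>j. Complex (x j) (y j)))) \<le> c}
      = {\<omega> \<in> space (gauss_pair n). \<forall>i<n.
           cmod (mat_vec n A (mat_vec n S (\<lambda>j. Complex (fst \<omega> j) (snd \<omega> j))) i) \<le> c}"
    unfolding vec_norm_inf_le_iff[OF n] by auto
  also have "\<dots> \<in> sets (gauss_pair n)"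
    unfolding mat_vec_def Complex_eq gauss_pair_def by measurable
  finally show ?thesis .
qed

theorem mainTheorem3:
  fixes n :: nat and Sigma S :: "nat \<Rightarrow> nat \<Rightarrow> complex" and \<alpha> :: real
  assumes "n \<ge> 1"
    and "psd_mat n Sigma"
    and "psd_mat n S" and "\<forall>i<n. \<forall>k<n. mat_mult n S S i k = Sigma i k"
    and "\<alpha> > 0"
  shows "measure (gauss_pair n)
           {(x, y) \<in> space (gauss_pair n).
              vec_norm_inf n (mat_vec n (dft_mat n)
                 (mat_vec n S (\<lambda>j. Complex (x j) (y j))))
              \<le> \<alpha> * spec_norm n S}
         \<ge> lower_inc_Gamma (real n) (\<alpha>\<^sup>2 / 2) / Gamma (real n)"
proof -
  note n = assms(1) and \<alpha> = assms(5)
  interpret prob_space "gauss_pair n" by (rule prob_space_gauss_pair)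
  have "lower_inc_Gamma (real n) (\<alpha>\<^sup>2 / 2) / Gamma (real n) = erlang_CDF (n - 1) (1/2) (\<alpha>\<^sup>2)"
    by (simp add: lower_inc_Gamma_div_Gamma_eq_erlang_CDF[OF n] erlang_CDF_transform[of "1/2"])
  also have "\<dots> = prob {(x, y) \<in> space (gauss_pair n). (\<Sum>i<n. (x i)\<^sup>2 + (y i)\<^sup>2) \<le> \<alpha>\<^sup>2}"
    by (rule measure_gauss_pair_sq_norm_le[OF n, symmetric]) simp
  also have "\<dots> \<le> prob {(x, y) \<in> space (gauss_pair n).
      vec_norm_inf n (mat_vec n (dft_mat n) (mat_vec n S (\<lambda>j. Complex (x j) (y j)))) \<le> \<alpha> * spec_norm n S}"
    using \<alpha> by (intro finite_measure_mono gauss_pair_vec_norm_inf_le_measurable[OF n])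
                (auto intro: vec_norm_inf_dft_mat_vec_Complex_le[OF n])
  finally show ?thesis .
qed

end
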